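(* Let $k\ge 1$ be an integer with $4\nmid k$ such that $\mathcal{D}:=(k^2+4)/\gcd(2,k)^2$ is squarefree, let $\alpha=\frac{k+\sqrt{k^2+4}}{2}$, let $p\ge 3$ be a prime and $\mathcal{F}_p(x)=x^{2p}-kx^p-1$. Then $p$ is a $k$-Wall-Sun-Sun prime if and only if $\mathcal{F}_p(\alpha)\equiv 0\pmod{p^2}$.
   Context: Let $(U_n)$ be defined by $U_0=0$, $U_1=1$, $U_n=kU_{n-1}+U_{n-2}$ for $n\ge 2$, and let $\pi(m)$ be the length of the period of $(U_n)$ modulo an integer $m\ge 2$. A prime $p$ is a $k$-Wall-Sun-Sun prime if $\pi(p^2)=\pi(p)$. Congruences involving $\alpha$ are taken in the ring of algebraic integers of $\mathbb{Q}(\sqrt{k^2+4})$: $x\equiv y\pmod{m}$ means $(x-y)/m$ is an algebraic integer. *)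

theory Defs
  imports "HOL-Computational_Algebra.Computational_Algebra" "HOL-Number_Theory.Number_Theory"
begin

fun U :: "int \<Rightarrow> nat \<Rightarrow> int" where
  "U k 0 = 0"
| "U k (Suc 0) = 1"
| "U k (Suc (Suc n)) = k * U k (Suc n) + U k n"

definition pisano :: "int \<Rightarrow> int \<Rightarrow> nat" where
  "pisano k m = (LEAST t. t > 0 \<and> (\<forall>j. [U k (j + t) = U k j] (mod m)))"

definition k_wall_sun_sun :: "int \<Rightarrow> nat \<Rightarrow> bool" where
  "k_wall_sun_sun k p \<longleftrightarrow> prime p \<and> pisano k (int p ^ 2) = pisano k (int p)"

end

(*
  Work in Z[alpha] = Z + Z alpha, alpha = (k + sqrt D) / 2, D = k^2 + 4.  Since
  alpha^n = U_n alpha + U_(n-1), the period pi(m) is the order of alpha modulo m in Z[alpha].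
  For an odd prime p, the binomial theorem and Euler's criterion give
  2 alpha^p = k + eps sqrt D (mod p), eps the Legendre symbol (D/p).

  If p does not divide D, then alpha^p = rho (mod p) for the root rho of x^2 - k x - 1 selected
  by eps; with rho' the other root, x = rho' alpha^p = -1 (mod p), so alpha^N = x^2 = 1 (mod p)
  for N = 2 (p - eps), which is prime to p.  Hence pi(p^2) = pi(p) iff alpha^N = 1 (mod p^2)
  iff x = -1 (mod p^2) iff alpha^p = rho (mod p^2), iff, by Hensel's lemma (rho - rho' = +-sqrt D
  is a unit mod p), F_p(alpha) = (alpha^p - rho) (alpha^p - rho') = 0 (mod p^2).

  If p divides D, squarefreeness gives p^2 not dividing D, and neither side holds:
  4 F_p(alpha) = (2 alpha^p - k)^2 - D = -D (mod p^2), and alpha^(4p) = 1 (mod p) while expanding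
  (k + sqrt D)^p modulo p^2 shows alpha^(4p) <> 1 (mod p^2).

  Finally F_p(alpha) = alpha^p (V_p - k) with alpha^p a unit of Z[alpha] and V_p an integer, so
  F_p(alpha) / p^2 is an algebraic integer iff p^2 divides V_p - k iff F_p(alpha) = 0 (mod p^2).
*)
theory Submission
  imports Defs
begin

lemma fermat_little_int:
  fixes x :: int
  assumes "prime p"
  shows "[x ^ p = x] (mod int p)"
proof -
  define y where "y = nat (x mod int p)"
  have "int p > 0" using prime_gt_0_nat[OF assms] by simp
  then have xy: "[x = int y] (mod int p)" unfolding y_def by (simp add: cong_def)
  have "[y ^ p = y] (mod p)"
  proof (cases "p dvd y")
    case True
    then have y: "[y = 0] (mod p)" by (simp add: cong_0_iff)
    then have "[y ^ p = 0] (mod p)"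
      using cong_pow[OF y, of p] prime_gt_0_nat[OF assms] by (simp add: power_0_left)
    with y show ?thesis by (meson cong_sym cong_trans)
  next
    case False
    then have "[y ^ (p - 1) * y = 1 * y] (mod p)"
      by (intro cong_scalar_right fermat_theorem[OF assms])
    with prime_gt_0_nat[OF assms] show ?thesis by (simp flip: power_Suc2)
  qed
  then have "[int y ^ p = int y] (mod int p)" by (simp flip: cong_int_iff)
  with xy show ?thesis by (meson cong_pow cong_sym cong_trans)
qed

lemma binomial_split:
  fixes x y :: "'a :: comm_semiring_1"
  assumes "0 < n"
  shows "(x + y) ^ n = x ^ n + (\<Sum>i\<in>{0<..<n}. of_nat (n choose i) * x ^ (n - i) * y ^ i) + y ^ n"
proof -
  have "{..n} = insert 0 (insert n {0<..<n})" using assms by auto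
  then have "(y + x) ^ n
      = (\<Sum>i\<in>insert 0 (insert n {0<..<n}). of_nat (n choose i) * y ^ i * x ^ (n - i))"
    by (simp only: binomial_ring)
  also have "\<dots> = x ^ n + (\<Sum>i\<in>{0<..<n}. of_nat (n choose i) * x ^ (n - i) * y ^ i) + y ^ n"
    using assms by (simp add: ac_simps)
  finally show ?thesis by (simp add: add.commute)
qed

lemma power4_add_mult_eq:
  fixes x m y :: "'a :: comm_ring_1"
  shows "(x + m * y) ^ 4
    = x ^ 4 + m * (4 * x ^ 3 * y) + m\<^sup>2 * (y\<^sup>2 * (6 * x\<^sup>2 + 4 * x * m * y + m\<^sup>2 * y\<^sup>2))"
  by (simp add: power2_eq_square power3_eq_cube power4_eq_xxxx algebra_simps)

lemma prime_square_not_dvd_if_squarefree_quotient: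
  fixes n d p :: int
  assumes "squarefree (n div d\<^sup>2)" "d\<^sup>2 dvd n" "prime p" "\<not> p dvd d"
  shows "\<not> p\<^sup>2 dvd n"
proof
  assume "p\<^sup>2 dvd n"
  then have "p\<^sup>2 dvd n div d\<^sup>2 * d\<^sup>2" using assms(2) by simp
  moreover have "coprime (p\<^sup>2) (d\<^sup>2)" using assms(3,4) by (simp add: prime_imp_coprime)
  ultimately have "p\<^sup>2 dvd n div d\<^sup>2" by (simp add: coprime_dvd_mult_left_iff)
  with assms(1) have "p dvd 1" by (rule squarefreeD)
  with assms(3) show False using not_prime_unit by blast
qed

lemma prime_square_not_dvd_square_plus_4:
  fixes k p :: int
  assumes "squarefree ((k\<^sup>2 + 4) div (gcd 2 k)\<^sup>2)" "prime p" "odd p"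
  shows "\<not> p\<^sup>2 dvd k\<^sup>2 + 4"
proof (rule prime_square_not_dvd_if_squarefree_quotient[OF assms(1) _ assms(2)])
  have "(gcd 2 k)\<^sup>2 dvd k\<^sup>2" "(gcd 2 k)\<^sup>2 dvd 2\<^sup>2" by (intro dvd_power_same; simp)+
  then show "(gcd 2 k)\<^sup>2 dvd k\<^sup>2 + 4" by simp
  show "\<not> p dvd gcd 2 k"
  proof
    assume "p dvd gcd 2 k"
    then have "is_unit p"
      using assms(3)
      by (meson coprime_common_divisor coprime_left_2_iff_odd dvd_refl dvd_trans gcd_dvd1)
    with assms(2) show False using not_prime_unit by blast
  qed
qed

section \<open>The ring \<open>\<int>[\<alpha>]\<close>\<close>

locale lucas =
  fixes k :: int
  assumes k_pos: "k \<ge> 1"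
begin

definition D :: int where "D = k\<^sup>2 + 4"
definition \<delta> :: real where "\<delta> = sqrt (of_int D)"
definition \<alpha> :: real where "\<alpha> = (of_int k + \<delta>) / 2"
definition \<beta> :: real where "\<beta> = of_int k - \<alpha>"

lemma D_pos: "D > 0"
  unfolding D_def by (simp add: add_nonneg_pos)

lemma \<delta>_square: "\<delta>\<^sup>2 = of_int D"
  unfolding \<delta>_def using D_pos by simp

lemma \<delta>_eq: "\<delta> = 2 * \<alpha> - of_int k"
  unfolding \<alpha>_def by (simp add: field_simps)

lemma \<alpha>_square: "\<alpha>\<^sup>2 = of_int k * \<alpha> + 1"
proof -
  have "(2 * \<alpha> - of_int k)\<^sup>2 = of_int k ^ 2 + 4"
    using \<delta>_square unfolding \<delta>_eq D_def by simp
  then show ?thesis by (simp add: power2_eq_square algebra_simps)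
qed

lemma \<beta>_square: "\<beta>\<^sup>2 = of_int k * \<beta> + 1"
  unfolding \<beta>_def using \<alpha>_square by (simp add: power2_eq_square algebra_simps)

lemma \<alpha>_times_\<beta>: "\<alpha> * \<beta> = -1"
  unfolding \<beta>_def using \<alpha>_square by (simp add: power2_eq_square algebra_simps)

lemma three_not_dvd_D: "\<not> 3 dvd D"
proof
  assume "3 dvd D"
  define q r where "q = k div 3" and "r = k mod 3"
  have "k = 3 * q + r" unfolding q_def r_def by simp
  then have "D = 3 * (3 * q\<^sup>2 + 2 * q * r) + (r\<^sup>2 + 4)"
    unfolding D_def by (simp add: power2_eq_square algebra_simps)
  with \<open>3 dvd D\<close> have "3 dvd r\<^sup>2 + 4" by (simp add: dvd_add_right_iff)
  moreover have "r = 0 \<or> r = 1 \<or> r = 2" unfolding r_def by auto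
  ultimately show False by (auto simp: dvd_eq_mod_eq_0)
qed

lemma \<delta>_power_ge_2:
  assumes "2 \<le> i"
  shows "\<delta> ^ i = of_int D * \<delta> ^ (i - 2)"
proof -
  define j where "j = i - 2"
  have "i = j + 2" using assms unfolding j_def by simp
  then have "\<delta> ^ i = \<delta> ^ j * \<delta>\<^sup>2" by (simp only: power_add)
  then show ?thesis unfolding \<delta>_square j_def by (simp only: mult.commute)
qed

lemma D_not_square: "D \<noteq> e\<^sup>2"
proof
  assume "D = e\<^sup>2"
  then have e: "\<bar>e\<bar>\<^sup>2 = k\<^sup>2 + 4" unfolding D_def by simp
  have "k\<^sup>2 < \<bar>e\<bar>\<^sup>2" "\<bar>e\<bar>\<^sup>2 < (k + 2)\<^sup>2"
    using e k_pos by (simp_all add: power2_eq_square algebra_simps)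
  have "k < \<bar>e\<bar>"
    using \<open>k\<^sup>2 < \<bar>e\<bar>\<^sup>2\<close> by (rule power_less_imp_less_base) simp
  moreover have "\<bar>e\<bar> < k + 2"
    using \<open>\<bar>e\<bar>\<^sup>2 < (k + 2)\<^sup>2\<close> by (rule power_less_imp_less_base) (use k_pos in simp)
  ultimately have "\<bar>e\<bar> = k + 1" by simp
  with e have "(k + 1)\<^sup>2 = k\<^sup>2 + 4" by simp
  then show False by (simp add: power2_eq_square algebra_simps) presburger
qed

lemma D_times_square_eq_square: "D * b\<^sup>2 = c\<^sup>2 \<Longrightarrow> b = 0"
proof (rule ccontr)
  assume eq: "D * b\<^sup>2 = c\<^sup>2" and "b \<noteq> 0"
  then have "b\<^sup>2 dvd c\<^sup>2" by (metis dvd_triv_right mult.commute)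
  then have "b dvd c" by simp
  then obtain e where "c = b * e" ..
  with eq \<open>b \<noteq> 0\<close> have "D = e\<^sup>2" by (simp add: power_mult_distrib)
  with D_not_square show False by blast
qed

lemma \<alpha>_coords_eq_0: "of_int a + of_int b * \<alpha> = 0 \<Longrightarrow> a = 0 \<and> b = 0"
proof -
  assume h: "of_int a + of_int b * \<alpha> = 0"
  have "of_int b * \<delta> = 2 * (of_int a + of_int b * \<alpha>) - of_int (2 * a + b * k)"
    unfolding \<delta>_eq by (simp add: algebra_simps)
  with h have "of_int b * \<delta> = - of_int (2 * a + b * k)"
    by simp
  then have "(of_int b * \<delta>)\<^sup>2 = (of_int (2 * a + b * k))\<^sup>2"
    by (simp only: power2_minus)
  moreover have "(of_int b * \<delta>)\<^sup>2 = (of_int (D * b\<^sup>2) :: real)"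
    by (simp add: power_mult_distrib \<delta>_square)
  ultimately have "of_int (D * b\<^sup>2) = (of_int ((2 * a + b * k)\<^sup>2) :: real)"
    by simp
  then have "D * b\<^sup>2 = (2 * a + b * k)\<^sup>2" by (simp only: of_int_eq_iff)
  then have "b = 0" by (rule D_times_square_eq_square)
  with h show ?thesis by simp
qed

lemma \<alpha>_coords_unique:
  "of_int a + of_int b * \<alpha> = of_int c + of_int d * \<alpha> \<Longrightarrow> a = c \<and> b = d"
  using \<alpha>_coords_eq_0[of "a - c" "b - d"] by (simp add: algebra_simps)

definition Z\<alpha> :: "real set" where
  "Z\<alpha> = {of_int a + of_int b * \<alpha> | a b. True}"

lemma Z\<alpha>_cases [consumes 1, cases set: Z\<alpha>]:
  assumes "x \<in> Z\<alpha>" obtains a b where "x = of_int a + of_int b * \<alpha>"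
  using assms unfolding Z\<alpha>_def by blast

lemma Z\<alpha>_coords [intro]: "of_int a + of_int b * \<alpha> \<in> Z\<alpha>"
  unfolding Z\<alpha>_def by blast

lemma Z\<alpha>_of_int [simp, intro]: "of_int a \<in> Z\<alpha>"
  using Z\<alpha>_coords[of a 0] by simp

lemma Z\<alpha>_of_nat [simp, intro]: "of_nat n \<in> Z\<alpha>"
  using Z\<alpha>_of_int[of "int n"] by simp

lemma Z\<alpha>_numeral [simp, intro]: "numeral n \<in> Z\<alpha>"
  using Z\<alpha>_of_int[of "numeral n"] by simp

lemma Z\<alpha>_0 [simp, intro]: "0 \<in> Z\<alpha>" and Z\<alpha>_1 [simp, intro]: "1 \<in> Z\<alpha>"
  using Z\<alpha>_of_int[of 0] Z\<alpha>_of_int[of 1] by simp_all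

lemma Z\<alpha>_\<alpha> [simp, intro]: "\<alpha> \<in> Z\<alpha>"
  using Z\<alpha>_coords[of 0 1] by simp

lemma Z\<alpha>_add [simp, intro]: "x \<in> Z\<alpha> \<Longrightarrow> y \<in> Z\<alpha> \<Longrightarrow> x + y \<in> Z\<alpha>"
proof (elim Z\<alpha>_cases)
  fix a b c d assume "x = of_int a + of_int b * \<alpha>" "y = of_int c + of_int d * \<alpha>"
  then have "x + y = of_int (a + c) + of_int (b + d) * \<alpha>" by (simp add: algebra_simps)
  then show "x + y \<in> Z\<alpha>" by (metis Z\<alpha>_coords)
qed

lemma Z\<alpha>_uminus [simp, intro]: "x \<in> Z\<alpha> \<Longrightarrow> - x \<in> Z\<alpha>"
proof (elim Z\<alpha>_cases)
  fix a b assume "x = of_int a + of_int b * \<alpha>"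
  then have "- x = of_int (- a) + of_int (- b) * \<alpha>" by simp
  then show "- x \<in> Z\<alpha>" by (metis Z\<alpha>_coords)
qed

lemma Z\<alpha>_diff [simp, intro]: "x \<in> Z\<alpha> \<Longrightarrow> y \<in> Z\<alpha> \<Longrightarrow> x - y \<in> Z\<alpha>"
  using Z\<alpha>_add[of x "- y"] by simp

lemma Z\<alpha>_mult [simp, intro]: "x \<in> Z\<alpha> \<Longrightarrow> y \<in> Z\<alpha> \<Longrightarrow> x * y \<in> Z\<alpha>"
proof (elim Z\<alpha>_cases)
  fix a b c d assume "x = of_int a + of_int b * \<alpha>" "y = of_int c + of_int d * \<alpha>"
  then have "x * y = of_int (a * c) + of_int (a * d + b * c) * \<alpha> + of_int (b * d) * \<alpha>\<^sup>2"
    by (simp add: algebra_simps power2_eq_square)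
  also have "\<dots> = of_int (a * c + b * d) + of_int (a * d + b * c + k * b * d) * \<alpha>"
    unfolding \<alpha>_square by (simp add: algebra_simps)
  finally show "x * y \<in> Z\<alpha>" by (metis Z\<alpha>_coords)
qed

lemma Z\<alpha>_power [simp, intro]: "x \<in> Z\<alpha> \<Longrightarrow> x ^ n \<in> Z\<alpha>"
  by (induction n) auto

lemma Z\<alpha>_sum [intro]: "(\<And>i. i \<in> A \<Longrightarrow> f i \<in> Z\<alpha>) \<Longrightarrow> sum f A \<in> Z\<alpha>"
  by (induction A rule: infinite_finite_induct) auto

lemma Z\<alpha>_\<beta> [simp, intro]: "\<beta> \<in> Z\<alpha>" and Z\<alpha>_\<delta> [simp, intro]: "\<delta> \<in> Z\<alpha>"
  unfolding \<beta>_def \<delta>_eq by auto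

lemma Ints_subset_Z\<alpha>: "x \<in> \<int> \<Longrightarrow> x \<in> Z\<alpha>"
  by (auto elim: Ints_cases)

section \<open>Congruences in \<open>\<int>[\<alpha>]\<close>\<close>

definition cong\<alpha> :: "real \<Rightarrow> real \<Rightarrow> int \<Rightarrow> bool"  ("(1[_ = _] '(mod\<^sub>\<alpha> _'))")
  where "[x = y] (mod\<^sub>\<alpha> m) \<longleftrightarrow> x \<in> Z\<alpha> \<and> y \<in> Z\<alpha> \<and> (\<exists>z\<in>Z\<alpha>. x - y = of_int m * z)"

lemma cong\<alpha>_Z\<alpha>: "[x = y] (mod\<^sub>\<alpha> m) \<Longrightarrow> x \<in> Z\<alpha> \<and> y \<in> Z\<alpha>"
  unfolding cong\<alpha>_def by blast

lemma cong\<alpha>_0_iff: "[x = 0] (mod\<^sub>\<alpha> m) \<longleftrightarrow> (\<exists>z\<in>Z\<alpha>. x = of_int m * z)"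
  unfolding cong\<alpha>_def by auto

lemma cong\<alpha>_iff_diff: "[x = y] (mod\<^sub>\<alpha> m) \<longleftrightarrow> x \<in> Z\<alpha> \<and> y \<in> Z\<alpha> \<and> [x - y = 0] (mod\<^sub>\<alpha> m)"
  unfolding cong\<alpha>_def by auto

lemma cong\<alpha>_multiple [intro]: "z \<in> Z\<alpha> \<Longrightarrow> [of_int m * z = 0] (mod\<^sub>\<alpha> m)"
  unfolding cong\<alpha>_0_iff by blast

lemma cong\<alpha>_of_nat_multiple:
  assumes "m dvd c" "z \<in> Z\<alpha>"
  shows "[of_nat c * z = 0] (mod\<^sub>\<alpha> int m)"
proof -
  obtain e where "c = m * e" using assms(1) ..
  then have "of_nat c * z = of_int (int m) * (of_nat e * z)" by simp
  also have "[\<dots> = 0] (mod\<^sub>\<alpha> int m)" using assms(2) by (intro cong\<alpha>_multiple) simp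
  finally show ?thesis .
qed

lemma cong\<alpha>_refl [simp, intro]: "x \<in> Z\<alpha> \<Longrightarrow> [x = x] (mod\<^sub>\<alpha> m)"
  unfolding cong\<alpha>_def using Z\<alpha>_0 by force

lemma cong\<alpha>_0_add:
  assumes "[x = 0] (mod\<^sub>\<alpha> m)" "[y = 0] (mod\<^sub>\<alpha> m)"
  shows "[x + y = 0] (mod\<^sub>\<alpha> m)"
proof -
  obtain z w where "z \<in> Z\<alpha>" "x = of_int m * z" "w \<in> Z\<alpha>" "y = of_int m * w"
    using assms unfolding cong\<alpha>_0_iff by blast
  then have "x + y = of_int m * (z + w)" "z + w \<in> Z\<alpha>" by (simp_all add: algebra_simps)
  then show ?thesis by auto
qed

lemma cong\<alpha>_0_mult:
  assumes "[x = 0] (mod\<^sub>\<alpha> m)" "y \<in> Z\<alpha>"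
  shows "[y * x = 0] (mod\<^sub>\<alpha> m)"
proof -
  obtain z where "z \<in> Z\<alpha>" "x = of_int m * z"
    using assms unfolding cong\<alpha>_0_iff by blast
  then have "y * x = of_int m * (y * z)" "y * z \<in> Z\<alpha>"
    using assms(2) by (simp_all add: mult.left_commute)
  then show ?thesis by (metis cong\<alpha>_multiple)
qed

lemma cong\<alpha>_sym:
  assumes "[x = y] (mod\<^sub>\<alpha> m)"
  shows "[y = x] (mod\<^sub>\<alpha> m)"
proof -
  have "[(- 1) * (x - y) = 0] (mod\<^sub>\<alpha> m)"
    using assms unfolding cong\<alpha>_iff_diff[of x] by (intro cong\<alpha>_0_mult) auto
  with assms show ?thesis unfolding cong\<alpha>_iff_diff[of y] cong\<alpha>_iff_diff[of x] by simp
qed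

lemma cong\<alpha>_add:
  assumes "[x = y] (mod\<^sub>\<alpha> m)" "[u = v] (mod\<^sub>\<alpha> m)"
  shows "[x + u = y + v] (mod\<^sub>\<alpha> m)"
proof -
  have "[(x - y) + (u - v) = 0] (mod\<^sub>\<alpha> m)"
    using assms unfolding cong\<alpha>_iff_diff[of x] cong\<alpha>_iff_diff[of u] by (intro cong\<alpha>_0_add) auto
  with assms show ?thesis
    unfolding cong\<alpha>_iff_diff[of "x + u"] cong\<alpha>_iff_diff[of x] cong\<alpha>_iff_diff[of u]
    by (simp add: algebra_simps)
qed

lemma cong\<alpha>_trans [trans]:
  assumes "[x = y] (mod\<^sub>\<alpha> m)" "[y = z] (mod\<^sub>\<alpha> m)"
  shows "[x = z] (mod\<^sub>\<alpha> m)"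
proof -
  have "[(x - y) + (y - z) = 0] (mod\<^sub>\<alpha> m)"
    using assms unfolding cong\<alpha>_iff_diff[of x] cong\<alpha>_iff_diff[of y] by (intro cong\<alpha>_0_add) auto
  with assms show ?thesis unfolding cong\<alpha>_iff_diff[of x] cong\<alpha>_iff_diff[of y] by simp
qed

lemma cong\<alpha>_mult:
  assumes "[x = y] (mod\<^sub>\<alpha> m)" "[u = v] (mod\<^sub>\<alpha> m)"
  shows "[x * u = y * v] (mod\<^sub>\<alpha> m)"
proof -
  have "[u * (x - y) + y * (u - v) = 0] (mod\<^sub>\<alpha> m)"
    using assms unfolding cong\<alpha>_iff_diff[of x] cong\<alpha>_iff_diff[of u]
    by (intro cong\<alpha>_0_add cong\<alpha>_0_mult) auto
  moreover have "u * (x - y) + y * (u - v) = x * u - y * v" by (simp add: algebra_simps)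
  ultimately show ?thesis
    using assms unfolding cong\<alpha>_iff_diff[of "x * u"] cong\<alpha>_iff_diff[of x] cong\<alpha>_iff_diff[of u]
    by simp
qed

lemma cong\<alpha>_scalar_left: "[x = y] (mod\<^sub>\<alpha> m) \<Longrightarrow> u \<in> Z\<alpha> \<Longrightarrow> [u * x = u * y] (mod\<^sub>\<alpha> m)"
  by (rule cong\<alpha>_mult[OF cong\<alpha>_refl])

lemma cong\<alpha>_diff:
  assumes "[x = y] (mod\<^sub>\<alpha> m)" "[u = v] (mod\<^sub>\<alpha> m)"
  shows "[x - u = y - v] (mod\<^sub>\<alpha> m)"
proof -
  have "[(- 1) * u = (- 1) * v] (mod\<^sub>\<alpha> m)"
    using assms(2) by (rule cong\<alpha>_scalar_left) simp
  from cong\<alpha>_add[OF assms(1) this] show ?thesis by simp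
qed

lemma cong\<alpha>_power: "[x = y] (mod\<^sub>\<alpha> m) \<Longrightarrow> [x ^ n = y ^ n] (mod\<^sub>\<alpha> m)"
  by (induction n) (auto intro: cong\<alpha>_mult)

lemma cong\<alpha>_sum:
  "(\<And>i. i \<in> A \<Longrightarrow> [f i = g i] (mod\<^sub>\<alpha> m)) \<Longrightarrow> [sum f A = sum g A] (mod\<^sub>\<alpha> m)"
  by (induction A rule: infinite_finite_induct) (auto intro: cong\<alpha>_add)

lemma cong\<alpha>_dvd_modulus:
  assumes "[x = y] (mod\<^sub>\<alpha> n)" "m dvd n"
  shows "[x = y] (mod\<^sub>\<alpha> m)"
proof -
  obtain z where "z \<in> Z\<alpha>" "x - y = of_int n * z"
    using assms unfolding cong\<alpha>_def by blast
  moreover obtain c where "n = m * c" using assms(2) ..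
  ultimately have "x - y = of_int m * (of_int c * z)" "of_int c * z \<in> Z\<alpha>" by simp_all
  with assms(1) show ?thesis unfolding cong\<alpha>_def by blast
qed

lemma cong\<alpha>_mult_modulus:
  assumes "[x = 0] (mod\<^sub>\<alpha> m)" "[y = 0] (mod\<^sub>\<alpha> n)"
  shows "[x * y = 0] (mod\<^sub>\<alpha> m * n)"
proof -
  obtain z w where "z \<in> Z\<alpha>" "x = of_int m * z" "w \<in> Z\<alpha>" "y = of_int n * w"
    using assms unfolding cong\<alpha>_0_iff by blast
  then have "x * y = of_int (m * n) * (z * w)" by (simp add: algebra_simps)
  moreover have "[of_int (m * n) * (z * w) = 0] (mod\<^sub>\<alpha> m * n)"
    using \<open>z \<in> Z\<alpha>\<close> \<open>w \<in> Z\<alpha>\<close> by (intro cong\<alpha>_multiple) simp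
  ultimately show ?thesis by (simp only:)
qed

lemma cong\<alpha>_coords_0_iff: "[of_int a + of_int b * \<alpha> = 0] (mod\<^sub>\<alpha> m) \<longleftrightarrow> m dvd a \<and> m dvd b"
proof
  assume "[of_int a + of_int b * \<alpha> = 0] (mod\<^sub>\<alpha> m)"
  then obtain z where z: "z \<in> Z\<alpha>" "of_int a + of_int b * \<alpha> = of_int m * z"
    unfolding cong\<alpha>_0_iff by blast
  from z(1) obtain c d where "z = of_int c + of_int d * \<alpha>" by (rule Z\<alpha>_cases)
  with z(2) have "of_int a + of_int b * \<alpha> = of_int (m * c) + of_int (m * d) * \<alpha>"
    by (simp add: algebra_simps)
  then have "a = m * c \<and> b = m * d" by (rule \<alpha>_coords_unique)
  then show "m dvd a \<and> m dvd b" by simp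
next
  assume "m dvd a \<and> m dvd b"
  then obtain c d where "a = m * c" "b = m * d" by (auto elim!: dvdE)
  then have "of_int a + of_int b * \<alpha> = of_int m * (of_int c + of_int d * \<alpha>)"
    by (simp add: algebra_simps)
  moreover have "[of_int m * (of_int c + of_int d * \<alpha>) = 0] (mod\<^sub>\<alpha> m)"
    by (intro cong\<alpha>_multiple Z\<alpha>_coords)
  ultimately show "[of_int a + of_int b * \<alpha> = 0] (mod\<^sub>\<alpha> m)" by (simp only:)
qed

lemma cong\<alpha>_of_int_iff: "[of_int a = of_int b] (mod\<^sub>\<alpha> m) \<longleftrightarrow> [a = b] (mod m)"
  using cong\<alpha>_coords_0_iff[of "a - b" 0 m]
  unfolding cong\<alpha>_iff_diff[of "of_int a"] cong_iff_dvd_diff by simp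

lemma cong\<alpha>_cancel_coprime:
  assumes "[of_int c * x = of_int c * y] (mod\<^sub>\<alpha> m)" "coprime c m" "x \<in> Z\<alpha>" "y \<in> Z\<alpha>"
  shows "[x = y] (mod\<^sub>\<alpha> m)"
proof -
  obtain u v where uv: "u * c + v * m = 1"
    using assms(2) by (metis bezout_int coprime_iff_gcd_eq_1)
  obtain z where "z \<in> Z\<alpha>" and z: "of_int c * x - of_int c * y = of_int m * z"
    using assms(1) unfolding cong\<alpha>_def by blast
  have "x - y = of_int (u * c + v * m) * (x - y)"
    using uv by simp
  also have "\<dots> = of_int u * (of_int c * x - of_int c * y) + of_int m * (of_int v * (x - y))"
    by (simp add: algebra_simps)
  also have "\<dots> = of_int m * (of_int u * z + of_int v * (x - y))"
    unfolding z by (simp add: algebra_simps)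
  finally have "x - y = of_int m * (of_int u * z + of_int v * (x - y))" .
  with assms(3,4) \<open>z \<in> Z\<alpha>\<close> show ?thesis unfolding cong\<alpha>_def by auto
qed

lemma cong\<alpha>_mult_cancel_modulus:
  assumes "m \<noteq> 0" "x \<in> Z\<alpha>"
  shows "[of_int m * x = 0] (mod\<^sub>\<alpha> m * n) \<longleftrightarrow> [x = 0] (mod\<^sub>\<alpha> n)"
  using assms unfolding cong\<alpha>_0_iff by (auto simp: mult.assoc)

lemma cong\<alpha>_mult_unit_iff:
  assumes "u * u' = 1" "u \<in> Z\<alpha>" "u' \<in> Z\<alpha>" "x \<in> Z\<alpha>" "y \<in> Z\<alpha>"
  shows "[u * x = u * y] (mod\<^sub>\<alpha> m) \<longleftrightarrow> [x = y] (mod\<^sub>\<alpha> m)"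
proof
  assume "[u * x = u * y] (mod\<^sub>\<alpha> m)"
  from cong\<alpha>_scalar_left[OF this assms(3)] show "[x = y] (mod\<^sub>\<alpha> m)"
    using assms(1) by (simp add: mult.assoc[symmetric] mult.commute[of u'])
qed (use assms in \<open>auto intro: cong\<alpha>_scalar_left\<close>)

lemma cong\<alpha>_freshmans_dream:
  assumes "prime p" "x \<in> Z\<alpha>" "y \<in> Z\<alpha>"
  shows "[(x + y) ^ p = x ^ p + y ^ p] (mod\<^sub>\<alpha> int p)"
proof -
  have "[(\<Sum>i\<in>{0<..<p}. of_nat (p choose i) * x ^ (p - i) * y ^ i) = (\<Sum>i\<in>{0<..<p}. 0)] (mod\<^sub>\<alpha> int p)"
    using assms by (intro cong\<alpha>_sum)
      (auto simp: mult.assoc intro!: cong\<alpha>_of_nat_multiple dvd_choose_prime)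
  then have "[x ^ p + (\<Sum>i\<in>{0<..<p}. of_nat (p choose i) * x ^ (p - i) * y ^ i) + y ^ p
      = x ^ p + 0 + y ^ p] (mod\<^sub>\<alpha> int p)"
    using assms by (intro cong\<alpha>_add) auto
  then show ?thesis unfolding binomial_split[OF prime_gt_0_nat[OF assms(1)], of x y] by simp
qed

lemma cong\<alpha>_power_lift:
  assumes "[x = y] (mod\<^sub>\<alpha> int n)"
  shows "[x ^ n = y ^ n] (mod\<^sub>\<alpha> (int n)\<^sup>2)"
proof -
  have x: "x \<in> Z\<alpha>" and y: "y \<in> Z\<alpha>" using cong\<alpha>_Z\<alpha>[OF assms] by auto
  define S where "S = (\<Sum>i<n. y ^ (n - Suc i) * x ^ i)"
  have "[S = (\<Sum>i<n. y ^ (n - Suc i) * y ^ i)] (mod\<^sub>\<alpha> int n)"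
    unfolding S_def using assms y by (intro cong\<alpha>_sum cong\<alpha>_scalar_left cong\<alpha>_power) auto
  also have "(\<Sum>i<n. y ^ (n - Suc i) * y ^ i) = of_int (int n) * y ^ (n - 1)"
    by (simp flip: power_add)
  also have "[\<dots> = 0] (mod\<^sub>\<alpha> int n)" by (intro cong\<alpha>_multiple Z\<alpha>_power y)
  finally have "[(x - y) * S = 0] (mod\<^sub>\<alpha> int n * int n)"
    using assms by (intro cong\<alpha>_mult_modulus) (auto simp: cong\<alpha>_iff_diff[of x])
  moreover have "x ^ n - y ^ n = (x - y) * S" unfolding S_def by (rule power_diff_sumr2)
  ultimately show ?thesis using x y by (simp add: cong\<alpha>_iff_diff[of "x ^ n"] power2_eq_square)
qed

lemma cong\<alpha>_power4_add_multiple: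
  assumes "x \<in> Z\<alpha>" "y \<in> Z\<alpha>"
  shows "[(x + of_int m * y) ^ 4 = x ^ 4 + of_int m * (4 * x ^ 3 * y)] (mod\<^sub>\<alpha> m\<^sup>2)"
proof -
  have "(x + of_int m * y) ^ 4 - (x ^ 4 + of_int m * (4 * x ^ 3 * y))
      = of_int (m\<^sup>2) * (y\<^sup>2 * (6 * x\<^sup>2 + 4 * x * of_int m * y + (of_int m)\<^sup>2 * y\<^sup>2))"
    unfolding power4_add_mult_eq by simp
  also have "[\<dots> = 0] (mod\<^sub>\<alpha> m\<^sup>2)" using assms by (intro cong\<alpha>_multiple) simp
  finally show ?thesis using assms unfolding cong\<alpha>_iff_diff[of "(_ + _) ^ 4"] by simp
qed

text \<open>Hensel's lemma for a quadratic whose roots differ by a unit modulo \<open>p\<close>.\<close>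
lemma cong\<alpha>_root_lift_iff:
  assumes "prime p" "coprime c (int p)" "r \<in> Z\<alpha>" "r' \<in> Z\<alpha>" "(r - r')\<^sup>2 = of_int c"
    and "[y = r] (mod\<^sub>\<alpha> int p)"
  shows "[y = r] (mod\<^sub>\<alpha> (int p)\<^sup>2) \<longleftrightarrow> [(y - r) * (y - r') = 0] (mod\<^sub>\<alpha> (int p)\<^sup>2)"
proof
  have y: "y \<in> Z\<alpha>" using cong\<alpha>_Z\<alpha>[OF assms(6)] by blast
  show "[y = r] (mod\<^sub>\<alpha> (int p)\<^sup>2) \<Longrightarrow> [(y - r) * (y - r') = 0] (mod\<^sub>\<alpha> (int p)\<^sup>2)"
    using assms(4) y by (subst mult.commute) (auto intro: cong\<alpha>_0_mult simp: cong\<alpha>_iff_diff[of y])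
  obtain w where w: "w \<in> Z\<alpha>" "y - r = of_int (int p) * w"
    using assms(6) unfolding cong\<alpha>_def by blast
  assume "[(y - r) * (y - r') = 0] (mod\<^sub>\<alpha> (int p)\<^sup>2)"
  then have "[of_int (int p) * (w * (y - r')) = 0] (mod\<^sub>\<alpha> int p * int p)"
    unfolding w(2) by (simp add: power2_eq_square mult.assoc)
  then have "[w * (y - r') = 0] (mod\<^sub>\<alpha> int p)"
    using prime_gt_0_nat[OF assms(1)] w(1) y assms(4)
    by (subst (asm) cong\<alpha>_mult_cancel_modulus) auto
  moreover have "[w * (y - r') = w * (r - r')] (mod\<^sub>\<alpha> int p)"
    using assms(4,6) w(1) by (intro cong\<alpha>_scalar_left cong\<alpha>_diff) auto
  ultimately have "[w * (r - r') = 0] (mod\<^sub>\<alpha> int p)" by (meson cong\<alpha>_sym cong\<alpha>_trans)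
  from cong\<alpha>_scalar_left[OF this, of "r - r'"]
  have "[of_int c * w = of_int c * 0] (mod\<^sub>\<alpha> int p)"
    using assms(3,4,5) by (simp add: power2_eq_square mult_ac)
  then have "[w = 0] (mod\<^sub>\<alpha> int p)" by (rule cong\<alpha>_cancel_coprime[OF _ assms(2) w(1) Z\<alpha>_0])
  then have "[of_int (int p) * w = 0] (mod\<^sub>\<alpha> int p * int p)"
    using prime_gt_0_nat[OF assms(1)] w(1) by (subst cong\<alpha>_mult_cancel_modulus) auto
  then show "[y = r] (mod\<^sub>\<alpha> (int p)\<^sup>2)"
    using y assms(3) unfolding cong\<alpha>_iff_diff[of y] w(2) by (simp add: power2_eq_square)
qed

section \<open>The period as the order of \<open>\<alpha>\<close>\<close>

lemma root_power_Suc: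
  fixes r :: real
  assumes "r\<^sup>2 = of_int k * r + 1"
  shows "r ^ Suc n = of_int (U k (Suc n)) * r + of_int (U k n)"
proof (induction n)
  case (Suc n)
  have "r ^ Suc (Suc n) = of_int (U k (Suc n)) * r\<^sup>2 + of_int (U k n) * r"
    using Suc by (simp add: algebra_simps power2_eq_square)
  also have "\<dots> = of_int (U k (Suc (Suc n))) * r + of_int (U k (Suc n))"
    unfolding assms by (simp add: algebra_simps)
  finally show ?case .
qed simp

lemma periodic_iff_cong\<alpha>:
  assumes "0 < n"
  shows "(\<forall>j. [U k (j + n) = U k j] (mod m)) \<longleftrightarrow> [\<alpha> ^ n = 1] (mod\<^sub>\<alpha> m)"
proof
  assume per: "\<forall>j. [U k (j + n) = U k j] (mod m)"
  obtain n' where n: "n = Suc n'" using assms by (cases n) auto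
  have "m dvd U k n" using per[rule_format, of 0] by (simp add: cong_iff_dvd_diff)
  moreover have "m dvd U k (Suc n) - 1"
    using per[rule_format, of 1] by (simp add: cong_iff_dvd_diff)
  moreover have "U k n' - 1 = (U k (Suc n) - 1) - k * U k n" by (simp add: n)
  ultimately have "m dvd U k n' - 1" by (metis dvd_diff dvd_mult)
  with \<open>m dvd U k n\<close> have "[of_int (U k n' - 1) + of_int (U k n) * \<alpha> = 0] (mod\<^sub>\<alpha> m)"
    unfolding cong\<alpha>_coords_0_iff by blast
  moreover have "\<alpha> ^ n - 1 = of_int (U k n' - 1) + of_int (U k n) * \<alpha>"
    unfolding n root_power_Suc[OF \<alpha>_square] by simp
  ultimately have "[\<alpha> ^ n - 1 = 0] (mod\<^sub>\<alpha> m)" by (simp only:)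
  then show "[\<alpha> ^ n = 1] (mod\<^sub>\<alpha> m)" unfolding cong\<alpha>_iff_diff[of "\<alpha> ^ n"] by simp
next
  assume per: "[\<alpha> ^ n = 1] (mod\<^sub>\<alpha> m)"
  show "\<forall>j. [U k (j + n) = U k j] (mod m)"
  proof
    fix j
    have "[\<alpha> ^ Suc j * \<alpha> ^ n = \<alpha> ^ Suc j * 1] (mod\<^sub>\<alpha> m)"
      using per by (rule cong\<alpha>_scalar_left) simp
    then have "[\<alpha> ^ Suc j * \<alpha> ^ n - \<alpha> ^ Suc j * 1 = 0] (mod\<^sub>\<alpha> m)"
      unfolding cong\<alpha>_iff_diff[of "\<alpha> ^ Suc j * \<alpha> ^ n"] by blast
    moreover have "\<alpha> ^ Suc j * \<alpha> ^ n - \<alpha> ^ Suc j * 1 = \<alpha> ^ Suc (j + n) - \<alpha> ^ Suc j"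
      by (simp add: power_add)
    also have "\<dots> = of_int (U k (j + n) - U k j) + of_int (U k (Suc (j + n)) - U k (Suc j)) * \<alpha>"
      unfolding root_power_Suc[OF \<alpha>_square] by (simp add: algebra_simps)
    finally have "m dvd U k (j + n) - U k j"
      unfolding cong\<alpha>_coords_0_iff by blast
    then show "[U k (j + n) = U k j] (mod m)" by (simp add: cong_iff_dvd_diff)
  qed
qed

definition ord\<alpha> :: "int \<Rightarrow> nat" where
  "ord\<alpha> m = (LEAST n. 0 < n \<and> [\<alpha> ^ n = 1] (mod\<^sub>\<alpha> m))"

lemma pisano_eq_ord\<alpha>: "pisano k m = ord\<alpha> m"
proof -
  have "(\<lambda>n. 0 < n \<and> (\<forall>j. [U k (j + n) = U k j] (mod m))) = (\<lambda>n. 0 < n \<and> [\<alpha> ^ n = 1] (mod\<^sub>\<alpha> m))"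
    by (rule ext) (use periodic_iff_cong\<alpha> in blast)
  then show ?thesis unfolding pisano_def ord\<alpha>_def by simp
qed

lemma ord\<alpha>_works:
  assumes "0 < N" "[\<alpha> ^ N = 1] (mod\<^sub>\<alpha> m)"
  shows "0 < ord\<alpha> m" "[\<alpha> ^ ord\<alpha> m = 1] (mod\<^sub>\<alpha> m)"
  using LeastI[of "\<lambda>n. 0 < n \<and> [\<alpha> ^ n = 1] (mod\<^sub>\<alpha> m)", OF conjI[OF assms]]
  unfolding ord\<alpha>_def by auto

lemma ord\<alpha>_divides:
  assumes "0 < N" "[\<alpha> ^ N = 1] (mod\<^sub>\<alpha> m)"
  shows "[\<alpha> ^ n = 1] (mod\<^sub>\<alpha> m) \<longleftrightarrow> ord\<alpha> m dvd n"
proof -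
  define t where "t = ord\<alpha> m"
  have t: "0 < t" "[\<alpha> ^ t = 1] (mod\<^sub>\<alpha> m)" using ord\<alpha>_works[OF assms] unfolding t_def by auto
  have \<alpha>_power_mult: "[\<alpha> ^ (t * q) = 1] (mod\<^sub>\<alpha> m)" for q
    using cong\<alpha>_power[OF t(2), of q] by (simp add: power_mult)
  show ?thesis unfolding t_def[symmetric]
  proof
    assume n: "[\<alpha> ^ n = 1] (mod\<^sub>\<alpha> m)"
    have "[\<alpha> ^ (t * (n div t)) * \<alpha> ^ (n mod t) = 1 * \<alpha> ^ (n mod t)] (mod\<^sub>\<alpha> m)"
      using \<alpha>_power_mult by (rule cong\<alpha>_mult) simp
    then have "[\<alpha> ^ (n mod t) = \<alpha> ^ n] (mod\<^sub>\<alpha> m)"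
      by (simp flip: power_add) (rule cong\<alpha>_sym)
    then have "[\<alpha> ^ (n mod t) = 1] (mod\<^sub>\<alpha> m)" using n by (rule cong\<alpha>_trans)
    moreover have "n mod t < t" using t(1) by simp
    ultimately have "n mod t = 0"
      using not_less_Least[of "n mod t" "\<lambda>n. 0 < n \<and> [\<alpha> ^ n = 1] (mod\<^sub>\<alpha> m)"]
      unfolding t_def ord\<alpha>_def by auto
    then show "t dvd n" by auto
  qed (auto simp: \<alpha>_power_mult)
qed

lemma cong\<alpha>_power_prime_square:
  assumes "0 < N" "[\<alpha> ^ N = 1] (mod\<^sub>\<alpha> int p)"
  shows "[\<alpha> ^ (N * p) = 1] (mod\<^sub>\<alpha> (int p)\<^sup>2)"
  using cong\<alpha>_power_lift[OF assms(2)] by (simp add: power_mult)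

lemma ord\<alpha>_square_eq_imp_cong:
  assumes "0 < p" "0 < N" "[\<alpha> ^ N = 1] (mod\<^sub>\<alpha> int p)"
    and "ord\<alpha> ((int p)\<^sup>2) = ord\<alpha> (int p)"
  shows "[\<alpha> ^ N = 1] (mod\<^sub>\<alpha> (int p)\<^sup>2)"
proof -
  have "ord\<alpha> (int p) dvd N" using ord\<alpha>_divides[OF assms(2,3)] assms(3) by simp
  moreover have "0 < N * p" using assms by simp
  note ord\<alpha>_divides[OF this cong\<alpha>_power_prime_square[OF assms(2,3)]]
  ultimately show ?thesis using assms(4) by simp
qed

lemma ord\<alpha>_prime_square_eq_iff:
  assumes "prime p" "0 < N" "[\<alpha> ^ N = 1] (mod\<^sub>\<alpha> int p)" "\<not> p dvd N"
  shows "ord\<alpha> ((int p)\<^sup>2) = ord\<alpha> (int p) \<longleftrightarrow> [\<alpha> ^ N = 1] (mod\<^sub>\<alpha> (int p)\<^sup>2)"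
proof
  show "ord\<alpha> ((int p)\<^sup>2) = ord\<alpha> (int p) \<Longrightarrow> [\<alpha> ^ N = 1] (mod\<^sub>\<alpha> (int p)\<^sup>2)"
    using ord\<alpha>_square_eq_imp_cong[OF prime_gt_0_nat[OF assms(1)] assms(2,3)] .
next
  assume N: "[\<alpha> ^ N = 1] (mod\<^sub>\<alpha> (int p)\<^sup>2)"
  define t t2 where "t = ord\<alpha> (int p)" and "t2 = ord\<alpha> ((int p)\<^sup>2)"
  have "0 < N * p" using assms prime_gt_0_nat by simp
  note dvd_p = ord\<alpha>_divides[OF assms(2,3)]
   and dvd_p2 = ord\<alpha>_divides[OF this cong\<alpha>_power_prime_square[OF assms(2,3)]]
  have "t dvd t2"
    using ord\<alpha>_works(2)[OF \<open>0 < N * p\<close> cong\<alpha>_power_prime_square[OF assms(2,3)]]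
    unfolding t_def t2_def dvd_p[symmetric] by (rule cong\<alpha>_dvd_modulus) simp
  then obtain e where e: "t2 = t * e" ..
  have "0 < t" using ord\<alpha>_works(1)[OF assms(2,3)] unfolding t_def .
  have "t2 dvd t * p"
    unfolding t2_def dvd_p2[symmetric] t_def
    using cong\<alpha>_power_prime_square[OF ord\<alpha>_works[OF assms(2,3)]] .
  with \<open>0 < t\<close> have "e dvd p" unfolding e by simp
  moreover have "\<not> p dvd e"
  proof
    assume "p dvd e"
    then have "p dvd t2" unfolding e by simp
    moreover have "t2 dvd N" using N dvd_p2 unfolding t2_def by blast
    ultimately show False using assms(4) by (blast intro: dvd_trans)
  qed
  ultimately have "e = 1" using assms(1) unfolding prime_nat_iff by blast
  then show "t2 = t" unfolding e by simp
qed

section \<open>Algebraic integers\<close>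

definition V :: "nat \<Rightarrow> int" where
  "V n = k * U k n + 2 * U k (n - 1)"

lemma \<alpha>_power_plus_\<beta>_power:
  assumes "0 < n"
  shows "\<alpha> ^ n + \<beta> ^ n = of_int (V n)"
proof -
  obtain m where n: "n = Suc m" using assms by (cases n) auto
  have "\<alpha> ^ n + \<beta> ^ n = of_int (U k n) * (\<alpha> + \<beta>) + 2 * of_int (U k m)"
    unfolding n root_power_Suc[OF \<alpha>_square] root_power_Suc[OF \<beta>_square] by (simp add: algebra_simps)
  then show ?thesis unfolding V_def n by (simp add: \<beta>_def)
qed

lemma Z\<alpha>_algebraic_int:
  assumes "x \<in> Z\<alpha>"
  shows "algebraic_int x"
proof -
  obtain a b where x: "x = of_int a + of_int b * \<alpha>" using assms by (rule Z\<alpha>_cases)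
  define P :: "real poly"
    where "P = [:of_int (a\<^sup>2 + a * b * k - b\<^sup>2), - of_int (2 * a + b * k), 1:]"
  have "poly P x = of_int b ^ 2 * (\<alpha>\<^sup>2 - of_int k * \<alpha> - 1)"
    unfolding P_def x by (simp add: algebra_simps power2_eq_square)
  then have "poly P x = 0" by (simp add: \<alpha>_square)
  moreover have "lead_coeff P = 1" "\<forall>i. Polynomial.coeff P i \<in> \<int>"
    unfolding P_def by (auto simp: coeff_pCons split: nat.splits)
  ultimately show ?thesis by (intro algebraic_int.intros[of P]) auto
qed

text \<open>As in \<open>rational_algebraic_int_is_int\<close>, clear the denominator in the monic equation.\<close>
lemma algebraic_int_rat_times_Z\<alpha>_cong_0:
  assumes "algebraic_int (of_int a / of_int b * u)" "b \<noteq> 0" "u \<in> Z\<alpha>"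
  obtains n where "[of_int a ^ n * u ^ n = 0] (mod\<^sub>\<alpha> b)"
proof -
  define x where "x = of_int a / of_int b * u"
  obtain P where P: "lead_coeff P = 1" "\<forall>i. Polynomial.coeff P i \<in> \<int>" "poly P x = 0"
    using assms(1) unfolding x_def[symmetric] by (auto elim: algebraic_int.cases)
  define n where "n = degree P"
  define S
    where "S = (\<Sum>i<n. Polynomial.coeff P i * (of_int a ^ i * of_int b ^ (n - Suc i) * u ^ i))"
  have "Polynomial.coeff P i \<in> Z\<alpha>" for i using P(2) by (simp add: Ints_subset_Z\<alpha>)
  then have "S \<in> Z\<alpha>" unfolding S_def using assms(3) by (intro Z\<alpha>_sum) simp
  have scaled: "x ^ i * of_int b ^ n = of_int a ^ i * of_int b ^ (n - i) * u ^ i" if "i \<le> n" for i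
  proof -
    have "(of_int b :: real) ^ n = of_int b ^ i * of_int b ^ (n - i)"
      using that by (simp flip: power_add)
    then show ?thesis unfolding x_def using assms(2) by (simp add: power_mult_distrib power_divide)
  qed
  have "0 = poly P x * of_int b ^ n" using P(3) by simp
  also have "\<dots> = (\<Sum>i\<le>n. Polynomial.coeff P i * (x ^ i * of_int b ^ n))"
    by (simp add: poly_altdef n_def sum_distrib_right mult.assoc)
  also have "\<dots> = (\<Sum>i\<le>n. Polynomial.coeff P i * (of_int a ^ i * of_int b ^ (n - i) * u ^ i))"
    using scaled by (intro sum.cong) auto
  also have "\<dots> = of_int a ^ n * u ^ n + of_int b * S"
  proof -
    have "Polynomial.coeff P n = 1" using P(1) unfolding n_def by simp
    moreover have "of_int b ^ (n - i) = of_int b * (of_int b ^ (n - Suc i) :: real)"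
      if "i < n" for i
      using that by (simp flip: power_Suc add: Suc_diff_Suc)
    ultimately show ?thesis
      unfolding S_def sum_distrib_left by (simp add: lessThan_Suc_atMost[symmetric] mult_ac)
  qed
  finally have "of_int a ^ n * u ^ n = of_int b * (- S)" by (simp add: eq_neg_iff_add_eq_0)
  with \<open>S \<in> Z\<alpha>\<close> show thesis by (intro that[of n]) (metis Z\<alpha>_uminus cong\<alpha>_multiple)
qed

lemma Rats_times_unit_algebraic_int_imp_Ints:
  assumes "algebraic_int (r * u)" "r \<in> \<rat>" "u * u' = 1" "u \<in> Z\<alpha>" "u' \<in> Z\<alpha>"
  shows "r \<in> \<int>"
proof -
  obtain a b where ab: "b > 0" "coprime a b" "r = of_int a / of_int b"
    using assms(2) by (rule Rats_cases')
  have "algebraic_int (of_int a / of_int b * u)" using assms(1) ab(3) by simp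
  then obtain n where "[of_int a ^ n * u ^ n = 0] (mod\<^sub>\<alpha> b)"
    by (rule algebraic_int_rat_times_Z\<alpha>_cong_0) (use ab(1) assms(4) in auto)
  then have "[u' ^ n * (of_int a ^ n * u ^ n) = u' ^ n * 0] (mod\<^sub>\<alpha> b)"
    using assms(5) by (intro cong\<alpha>_scalar_left) simp_all
  moreover have "u' ^ n * (of_int a ^ n * u ^ n) = of_int a ^ n * (u * u') ^ n"
    by (simp only: power_mult_distrib mult_ac)
  ultimately have "[of_int (a ^ n) = 0] (mod\<^sub>\<alpha> b)" using assms(3) by simp
  then have "b dvd a ^ n" using cong\<alpha>_of_int_iff[of "a ^ n" 0 b] by (simp add: cong_0_iff)
  with ab(2) have "b dvd 1" by (metis coprime_common_divisor coprime_power_left_iff dvd_refl)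
  with ab show ?thesis by simp
qed

end

locale lucas_prime = lucas +
  fixes p :: nat
  assumes prime_p: "prime p" and p_ge_3: "p \<ge> 3"
begin

definition F :: real where
  "F = \<alpha> ^ (2 * p) - of_int k * \<alpha> ^ p - 1"

lemma F_square: "F = (\<alpha> ^ p)\<^sup>2 - of_int k * \<alpha> ^ p - 1"
  unfolding F_def by (metis mult.commute power_mult)

lemma p_pos: "0 < p"
  using p_ge_3 by simp

lemma p_odd: "odd p"
  using prime_p p_ge_3 prime_odd_nat by auto

lemma prime_int_p: "prime (int p)"
  using prime_p by simp

lemma coprime_power_2_p: "coprime (2 ^ n) (int p)"
  using p_odd by simp

definition \<epsilon> :: int where
  "\<epsilon> = Legendre D (int p)"

lemma two_\<alpha>_power_cong: "[2 * \<alpha> ^ p = of_int k + of_int \<epsilon> * \<delta>] (mod\<^sub>\<alpha> int p)"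
proof -
  define h where "h = (p - 1) div 2"
  have p: "p = 2 * h + 1" using p_odd unfolding h_def by presburger
  have "[of_int 2 = of_int (2 ^ p)] (mod\<^sub>\<alpha> int p)"
    unfolding cong\<alpha>_of_int_iff using fermat_little_int[OF prime_p] by (rule cong_sym)
  then have "[of_int 2 * \<alpha> ^ p = of_int (2 ^ p) * \<alpha> ^ p] (mod\<^sub>\<alpha> int p)"
    by (rule cong\<alpha>_mult) simp
  also have "of_int (2 ^ p) * \<alpha> ^ p = (of_int k + \<delta>) ^ p"
    by (simp add: \<delta>_eq power_mult_distrib)
  also have "[\<dots> = of_int k ^ p + \<delta> ^ p] (mod\<^sub>\<alpha> int p)"
    by (rule cong\<alpha>_freshmans_dream[OF prime_p]) auto
  also have "\<delta> ^ p = \<delta> * of_int (D ^ h)"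
    unfolding p by (simp add: power_mult \<delta>_square)
  also have "[of_int k ^ p + \<delta> * of_int (D ^ h) = of_int k + \<delta> * of_int \<epsilon>] (mod\<^sub>\<alpha> int p)"
  proof (intro cong\<alpha>_add cong\<alpha>_scalar_left)
    show "[of_int k ^ p = of_int k] (mod\<^sub>\<alpha> int p)"
      using fermat_little_int[OF prime_p, of k] unfolding cong\<alpha>_of_int_iff[symmetric] by simp
    show "[of_int (D ^ h) = of_int \<epsilon>] (mod\<^sub>\<alpha> int p)"
      using euler_criterion[OF prime_p, of D] p_ge_3
      unfolding cong\<alpha>_of_int_iff h_def \<epsilon>_def by (simp add: cong_sym_eq)
  qed simp
  finally show ?thesis by (simp add: mult.commute)
qed

section \<open>Unramified primes: \<open>p \<nmid> D\<close>\<close>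

text \<open>For \<open>p \<nmid> D\<close>, \<open>\<rho>\<close> is the root of \<open>x\<^sup>2 - k x - 1\<close> congruent to \<open>\<alpha>\<^sup>p\<close> modulo \<open>p\<close>.\<close>
definition \<rho> :: real where "\<rho> = (if \<epsilon> = 1 then \<alpha> else \<beta>)"
definition \<rho>' :: real where "\<rho>' = (if \<epsilon> = 1 then \<beta> else \<alpha>)"

lemma \<rho>_Z\<alpha> [simp]: "\<rho> \<in> Z\<alpha>" "\<rho>' \<in> Z\<alpha>"
  unfolding \<rho>_def \<rho>'_def by simp_all

lemma \<rho>_times_\<rho>': "\<rho> * \<rho>' = -1"
  unfolding \<rho>_def \<rho>'_def using \<alpha>_times_\<beta> by (simp add: mult.commute)

lemma \<rho>_plus_\<rho>': "\<rho> + \<rho>' = of_int k"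
  unfolding \<rho>_def \<rho>'_def \<beta>_def by simp

lemma \<rho>_minus_\<rho>'_square: "(\<rho> - \<rho>')\<^sup>2 = of_int D"
proof -
  have "(\<alpha> - \<beta>)\<^sup>2 = of_int D" unfolding \<beta>_def using \<delta>_square \<delta>_eq by simp
  then show ?thesis unfolding \<rho>_def \<rho>'_def by (simp add: power2_commute)
qed

lemma F_eq_roots: "F = (\<alpha> ^ p - \<rho>) * (\<alpha> ^ p - \<rho>')"
proof -
  have "(\<alpha> ^ p - \<rho>) * (\<alpha> ^ p - \<rho>') = (\<alpha> ^ p)\<^sup>2 - (\<rho> + \<rho>') * \<alpha> ^ p + \<rho> * \<rho>'"
    by (simp add: power2_eq_square algebra_simps)
  then show ?thesis unfolding F_square \<rho>_times_\<rho>' \<rho>_plus_\<rho>' by simp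
qed

lemma \<epsilon>_unramified: "\<not> int p dvd D \<Longrightarrow> \<epsilon> = 1 \<or> \<epsilon> = -1"
  unfolding \<epsilon>_def Legendre_def by (auto simp: cong_0_iff)

lemma \<alpha>_power_p_cong_\<rho>:
  assumes "\<not> int p dvd D"
  shows "[\<alpha> ^ p = \<rho>] (mod\<^sub>\<alpha> int p)"
proof -
  have "of_int k + of_int \<epsilon> * \<delta> = 2 * \<rho>"
    using \<epsilon>_unramified[OF assms] unfolding \<rho>_def \<beta>_def \<delta>_eq by auto
  then have "[of_int 2 * \<alpha> ^ p = of_int 2 * \<rho>] (mod\<^sub>\<alpha> int p)"
    using two_\<alpha>_power_cong by simp
  moreover have "coprime 2 (int p)" using coprime_power_2_p[of 1] by simp
  ultimately show ?thesis by (auto intro: cong\<alpha>_cancel_coprime[of 2])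
qed

lemma \<alpha>_power_eq_square:
  obtains N where "0 < N" "\<not> p dvd N" "\<alpha> ^ N = (\<rho>' * \<alpha> ^ p)\<^sup>2"
proof -
  have "\<not> p dvd 2" "\<not> p dvd p - 1" using p_ge_3 by (auto dest: dvd_imp_le)
  moreover have "\<not> p dvd p + 1" using dvd_add_right_iff[OF dvd_refl, of p 1] p_ge_3 by auto
  ultimately have not_dvd: "\<not> p dvd (p - 1) * 2" "\<not> p dvd (p + 1) * 2"
    unfolding prime_dvd_mult_iff[OF prime_p] by simp_all
  show thesis
  proof (cases "\<epsilon> = 1")
    case True
    have "\<alpha> ^ p = \<alpha> * \<alpha> ^ (p - 1)" using p_pos by (metis Suc_diff_1 power_Suc)
    then have "\<rho>' * \<alpha> ^ p = (\<alpha> * \<beta>) * \<alpha> ^ (p - 1)"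
      unfolding \<rho>'_def using True by (simp add: ac_simps)
    then have "\<rho>' * \<alpha> ^ p = - (\<alpha> ^ (p - 1))" by (simp add: \<alpha>_times_\<beta>)
    then have "\<alpha> ^ ((p - 1) * 2) = (\<rho>' * \<alpha> ^ p)\<^sup>2" by (simp add: power_mult)
    with not_dvd p_ge_3 show thesis by (intro that[of "(p - 1) * 2"]) auto
  next
    case False
    then have "\<rho>' * \<alpha> ^ p = \<alpha> ^ (p + 1)" unfolding \<rho>'_def by simp
    then have "\<alpha> ^ ((p + 1) * 2) = (\<rho>' * \<alpha> ^ p)\<^sup>2" by (simp only: power_mult)
    with not_dvd show thesis by (intro that[of "(p + 1) * 2"]) auto
  qed
qed

lemma ord\<alpha>_square_eq_iff_cong_F_unramified:
  assumes "\<not> int p dvd D"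
  shows "ord\<alpha> ((int p)\<^sup>2) = ord\<alpha> (int p) \<longleftrightarrow> [F = 0] (mod\<^sub>\<alpha> (int p)\<^sup>2)"
proof -
  obtain N where N: "0 < N" "\<not> p dvd N" "\<alpha> ^ N = (\<rho>' * \<alpha> ^ p)\<^sup>2"
    by (rule \<alpha>_power_eq_square)
  define x where "x = \<rho>' * \<alpha> ^ p"
  have x: "[x = -1] (mod\<^sub>\<alpha> int p)"
    using cong\<alpha>_scalar_left[OF \<alpha>_power_p_cong_\<rho>[OF assms], of \<rho>'] \<rho>_times_\<rho>'
    unfolding x_def by (simp add: mult.commute)
  have \<alpha>_power_N: "[\<alpha> ^ N = 1] (mod\<^sub>\<alpha> int p)"
    using cong\<alpha>_power[OF x, of 2] N(3) unfolding x_def by simp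
  have "ord\<alpha> ((int p)\<^sup>2) = ord\<alpha> (int p) \<longleftrightarrow> [\<alpha> ^ N = 1] (mod\<^sub>\<alpha> (int p)\<^sup>2)"
    by (rule ord\<alpha>_prime_square_eq_iff[OF prime_p N(1) \<alpha>_power_N N(2)])
  also have "\<dots> \<longleftrightarrow> [(x - (- 1)) * (x - 1) = 0] (mod\<^sub>\<alpha> (int p)\<^sup>2)"
    using cong\<alpha>_Z\<alpha>[OF x] unfolding N(3) x_def[symmetric] cong\<alpha>_iff_diff[of "x\<^sup>2"]
    by (simp add: power2_eq_square algebra_simps)
  also have "\<dots> \<longleftrightarrow> [x = - 1] (mod\<^sub>\<alpha> (int p)\<^sup>2)"
    using coprime_power_2_p[of 2]
    by (intro cong\<alpha>_root_lift_iff[OF prime_p _ _ _ _ x, symmetric]) auto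
  also have "\<dots> \<longleftrightarrow> [\<rho>' * \<alpha> ^ p = \<rho>' * \<rho>] (mod\<^sub>\<alpha> (int p)\<^sup>2)"
    unfolding x_def \<rho>_times_\<rho>'[symmetric] by (simp add: mult.commute)
  also have "\<dots> \<longleftrightarrow> [\<alpha> ^ p = \<rho>] (mod\<^sub>\<alpha> (int p)\<^sup>2)"
    using \<rho>_times_\<rho>' by (intro cong\<alpha>_mult_unit_iff[of _ "- \<rho>"]) (auto simp: mult.commute)
  also have "\<dots> \<longleftrightarrow> [F = 0] (mod\<^sub>\<alpha> (int p)\<^sup>2)"
    unfolding F_eq_roots
  proof (rule cong\<alpha>_root_lift_iff[OF prime_p _ \<rho>_Z\<alpha> \<rho>_minus_\<rho>'_square \<alpha>_power_p_cong_\<rho>[OF assms]])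
    show "coprime D (int p)"
      using prime_imp_coprime[OF prime_int_p assms] by (simp add: coprime_commute)
  qed
  finally show ?thesis .
qed

section \<open>Ramified primes: \<open>p \<mid> D\<close>\<close>

lemma two_\<alpha>_power_cong_ramified:
  assumes "int p dvd D"
  shows "[(2 * \<alpha>) ^ p = of_int (k ^ p) + of_int (int p) * (of_int (k ^ (p - 1)) * \<delta>)]
    (mod\<^sub>\<alpha> (int p)\<^sup>2)"
proof -
  have "p \<noteq> 3" using assms three_not_dvd_D by auto
  moreover have "p \<noteq> 4" using p_odd by auto
  ultimately have "4 \<le> p" using p_ge_3 by simp
  obtain d where d: "D = int p * d" using assms ..
  have "[of_nat (p choose i) * of_int k ^ (p - i) * \<delta> ^ i = 0] (mod\<^sub>\<alpha> (int p)\<^sup>2)"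
    if i: "i \<in> {1<..<p}" for i
  proof -
    have "p dvd p choose i" using i prime_p by (intro dvd_choose_prime) auto
    then obtain c where c: "p choose i = p * c" ..
    have "\<delta> ^ i = of_int D * \<delta> ^ (i - 2)" using i by (intro \<delta>_power_ge_2) simp
    then have "of_nat (p choose i) * of_int k ^ (p - i) * \<delta> ^ i
        = of_int ((int p)\<^sup>2) * (of_nat c * of_int d * of_int k ^ (p - i) * \<delta> ^ (i - 2))"
      unfolding c d by (simp add: power2_eq_square)
    then show ?thesis by (simp only:) (intro cong\<alpha>_multiple; simp)
  qed
  then have middle:
    "[(\<Sum>i\<in>{1<..<p}. of_nat (p choose i) * of_int k ^ (p - i) * \<delta> ^ i) = 0] (mod\<^sub>\<alpha> (int p)\<^sup>2)"
    using cong\<alpha>_sum[of "{1<..<p}" _ "\<lambda>_. 0"] by simp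
  have "\<delta> ^ p = of_int D * (of_int D * \<delta> ^ (p - 4))"
    using \<open>4 \<le> p\<close> \<delta>_power_ge_2[of p] \<delta>_power_ge_2[of "p - 2"] by simp
  also have "\<dots> = of_int ((int p)\<^sup>2) * (of_int (d\<^sup>2) * \<delta> ^ (p - 4))"
    unfolding d by (simp add: power2_eq_square)
  finally have last: "[\<delta> ^ p = 0] (mod\<^sub>\<alpha> (int p)\<^sup>2)" by (simp only:) (intro cong\<alpha>_multiple; simp)
  have "{0<..<p} = insert 1 {1<..<p}" using p_ge_3 by auto
  then have "(2 * \<alpha>) ^ p = of_int k ^ p + of_int (int p) * (of_int k ^ (p - 1) * \<delta>)
      + (\<Sum>i\<in>{1<..<p}. of_nat (p choose i) * of_int k ^ (p - i) * \<delta> ^ i) + \<delta> ^ p"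
    using binomial_split[OF p_pos, of "of_int k" \<delta>] by (simp add: \<delta>_eq)
  also have "[\<dots> = of_int k ^ p + of_int (int p) * (of_int k ^ (p - 1) * \<delta>) + 0 + 0]
      (mod\<^sub>\<alpha> (int p)\<^sup>2)"
    using middle last by (intro cong\<alpha>_add) auto
  finally show ?thesis by simp
qed

lemma not_dvd_k_ramified:
  assumes "int p dvd D"
  shows "\<not> int p dvd k"
proof
  assume "int p dvd k"
  then have "int p dvd D - k\<^sup>2" using assms by (simp add: power2_eq_square)
  then have "int p dvd 2 ^ 2" unfolding D_def by simp
  then have "is_unit (int p)" by (rule coprime_common_divisor[OF coprime_power_2_p _ dvd_refl])
  with prime_p show False by simp
qed

lemma \<alpha>_power_4p_cong_ramified:
  assumes "int p dvd D"
  shows "[\<alpha> ^ (p * 4) = 1] (mod\<^sub>\<alpha> int p)"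
proof -
  have "\<epsilon> = 0" using assms by (simp add: \<epsilon>_def Legendre_def cong_0_iff)
  then have "[(2 * \<alpha> ^ p) ^ 4 = (of_int k) ^ 4] (mod\<^sub>\<alpha> int p)"
    using two_\<alpha>_power_cong by (intro cong\<alpha>_power) simp
  also have "(of_int k) ^ 4 = (of_int (k ^ 4) :: real)" by simp
  also have "[\<dots> = of_int (2 ^ 4)] (mod\<^sub>\<alpha> int p)"
  proof -
    have "k ^ 4 - 2 ^ 4 = D * (D - 8)"
      unfolding D_def by (simp add: algebra_simps power4_eq_xxxx power2_eq_square)
    then show ?thesis unfolding cong\<alpha>_of_int_iff cong_iff_dvd_diff using assms by simp
  qed
  finally have "[of_int (2 ^ 4) * \<alpha> ^ (p * 4) = of_int (2 ^ 4) * 1] (mod\<^sub>\<alpha> int p)"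
    by (simp add: power_mult_distrib power_mult)
  then show ?thesis by (rule cong\<alpha>_cancel_coprime[OF _ coprime_power_2_p]) simp_all
qed

lemma two_\<alpha>_power_4p_cong_ramified:
  assumes "int p dvd D"
  defines "c \<equiv> (k ^ p) ^ 3 * k ^ (p - 1)"
  shows "[(2 * \<alpha>) ^ (p * 4) = of_int ((k ^ p) ^ 4 - 4 * int p * c * k) + of_int (8 * int p * c) * \<alpha>]
    (mod\<^sub>\<alpha> (int p)\<^sup>2)"
proof -
  define a b where "a = k ^ p" and "b = of_int (k ^ (p - 1)) * \<delta>"
  have "[(2 * \<alpha>) ^ (p * 4) = (of_int a + of_int (int p) * b) ^ 4] (mod\<^sub>\<alpha> (int p)\<^sup>2)"
    unfolding power_mult a_def b_def by (intro cong\<alpha>_power two_\<alpha>_power_cong_ramified assms)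
  also have "[(of_int a + of_int (int p) * b) ^ 4
      = of_int a ^ 4 + of_int (int p) * (4 * of_int a ^ 3 * b)] (mod\<^sub>\<alpha> (int p)\<^sup>2)"
    by (rule cong\<alpha>_power4_add_multiple) (simp_all add: b_def)
  also have "of_int a ^ 4 + of_int (int p) * (4 * of_int a ^ 3 * b)
      = of_int ((k ^ p) ^ 4 - 4 * int p * c * k) + of_int (8 * int p * c) * \<alpha>"
    unfolding a_def b_def c_def \<delta>_eq by (simp add: algebra_simps)
  finally show ?thesis .
qed

lemma not_cong_\<alpha>_power_4p_ramified:
  assumes "int p dvd D"
  shows "\<not> [\<alpha> ^ (p * 4) = 1] (mod\<^sub>\<alpha> (int p)\<^sup>2)"
proof
  assume \<alpha>_power: "[\<alpha> ^ (p * 4) = 1] (mod\<^sub>\<alpha> (int p)\<^sup>2)"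
  define c where "c = (k ^ p) ^ 3 * k ^ (p - 1)"
  define e where "e = (k ^ p) ^ 4 - 4 * int p * c * k - 2 ^ (p * 4)"
  have "[of_int (2 ^ (p * 4)) * \<alpha> ^ (p * 4) = of_int (2 ^ (p * 4)) * 1] (mod\<^sub>\<alpha> (int p)\<^sup>2)"
    using \<alpha>_power by (rule cong\<alpha>_scalar_left) simp
  then have "[of_int ((k ^ p) ^ 4 - 4 * int p * c * k) + of_int (8 * int p * c) * \<alpha>
      = of_int (2 ^ (p * 4)) * 1]
      (mod\<^sub>\<alpha> (int p)\<^sup>2)"
    using two_\<alpha>_power_4p_cong_ramified[OF assms] unfolding c_def
    by (simp add: power_mult_distrib) (meson cong\<alpha>_sym cong\<alpha>_trans)
  then have "[of_int e + of_int (8 * int p * c) * \<alpha> = 0] (mod\<^sub>\<alpha> (int p)\<^sup>2)"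
    unfolding cong\<alpha>_iff_diff[of "of_int _ + _"] e_def by (simp add: algebra_simps)
  then have "int p * int p dvd int p * (8 * c)"
    unfolding cong\<alpha>_coords_0_iff by (simp add: power2_eq_square ac_simps)
  then have "int p dvd 2 ^ 3 * c" using p_pos by simp
  then have "int p dvd c"
    using coprime_power_2_p[of 3] by (metis coprime_commute coprime_dvd_mult_right_iff)
  then have "int p dvd (k ^ p) ^ 3 \<or> int p dvd k ^ (p - 1)"
    unfolding c_def by (simp only: prime_dvd_mult_iff[OF prime_int_p])
  then have "int p dvd k" by (auto dest!: prime_dvd_power[OF prime_int_p])
  with not_dvd_k_ramified[OF assms] show False ..
qed

lemma not_cong_F_ramified:
  assumes "int p dvd D" "\<not> (int p)\<^sup>2 dvd D"
  shows "\<not> [F = 0] (mod\<^sub>\<alpha> (int p)\<^sup>2)"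
proof
  assume F: "[F = 0] (mod\<^sub>\<alpha> (int p)\<^sup>2)"
  have "\<epsilon> = 0" using assms by (simp add: \<epsilon>_def Legendre_def cong_0_iff)
  then have "[2 * \<alpha> ^ p - of_int k = 0] (mod\<^sub>\<alpha> int p)"
    using two_\<alpha>_power_cong unfolding cong\<alpha>_iff_diff[of "2 * _"] by simp
  then obtain w where w: "w \<in> Z\<alpha>" "2 * \<alpha> ^ p - of_int k = of_int (int p) * w"
    unfolding cong\<alpha>_0_iff by blast
  have "of_int D = (2 * \<alpha> ^ p - of_int k)\<^sup>2 - 4 * F"
    unfolding F_square D_def by (simp add: power2_eq_square algebra_simps)
  also have "\<dots> = of_int ((int p)\<^sup>2) * w\<^sup>2 - 4 * F"
    unfolding w(2) by (simp add: power_mult_distrib)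
  also have "[\<dots> = 0 - 4 * 0] (mod\<^sub>\<alpha> (int p)\<^sup>2)"
    using F w(1) by (intro cong\<alpha>_diff cong\<alpha>_scalar_left cong\<alpha>_multiple) auto
  finally have "[of_int D = of_int 0] (mod\<^sub>\<alpha> (int p)\<^sup>2)" by simp
  with assms(2) show False unfolding cong\<alpha>_of_int_iff by (simp add: cong_0_iff)
qed

lemma ord\<alpha>_square_neq_ramified:
  assumes "int p dvd D"
  shows "ord\<alpha> ((int p)\<^sup>2) \<noteq> ord\<alpha> (int p)"
  using ord\<alpha>_square_eq_imp_cong[OF p_pos _ \<alpha>_power_4p_cong_ramified[OF assms]]
    not_cong_\<alpha>_power_4p_ramified[OF assms] p_pos by auto

lemma ord\<alpha>_square_eq_iff_cong_F:
  assumes "\<not> (int p)\<^sup>2 dvd D"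
  shows "ord\<alpha> ((int p)\<^sup>2) = ord\<alpha> (int p) \<longleftrightarrow> [F = 0] (mod\<^sub>\<alpha> (int p)\<^sup>2)"
  using ord\<alpha>_square_eq_iff_cong_F_unramified ord\<alpha>_square_neq_ramified
    not_cong_F_ramified[OF _ assms] by blast

section \<open>\<open>F\<close> and algebraic integers\<close>

lemma \<alpha>_power_p_times_\<beta>_power_p: "\<alpha> ^ p * \<beta> ^ p = -1"
  using p_odd by (simp add: \<alpha>_times_\<beta> flip: power_mult_distrib)

lemma F_eq_unit_times_int: "F = \<alpha> ^ p * of_int (V p - k)"
proof -
  have "F = \<alpha> ^ p * (\<alpha> ^ p - of_int k) + \<alpha> ^ p * \<beta> ^ p"
    unfolding F_square \<alpha>_power_p_times_\<beta>_power_p by (simp add: power2_eq_square algebra_simps)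
  also have "\<dots> = \<alpha> ^ p * (\<alpha> ^ p + \<beta> ^ p - of_int k)" by (simp add: algebra_simps)
  finally show ?thesis using \<alpha>_power_plus_\<beta>_power[OF p_pos] by simp
qed

lemma cong_F_iff_dvd: "[F = 0] (mod\<^sub>\<alpha> (int p)\<^sup>2) \<longleftrightarrow> (int p)\<^sup>2 dvd V p - k"
proof -
  have "[F = 0] (mod\<^sub>\<alpha> (int p)\<^sup>2) \<longleftrightarrow> [\<alpha> ^ p * of_int (V p - k) = \<alpha> ^ p * of_int 0] (mod\<^sub>\<alpha> (int p)\<^sup>2)"
    unfolding F_eq_unit_times_int by simp
  also have "\<dots> \<longleftrightarrow> [of_int (V p - k) = of_int 0] (mod\<^sub>\<alpha> (int p)\<^sup>2)"
    using \<alpha>_power_p_times_\<beta>_power_p by (intro cong\<alpha>_mult_unit_iff[of _ "- (\<beta> ^ p)"]) auto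
  finally show ?thesis unfolding cong\<alpha>_of_int_iff by (simp add: cong_0_iff)
qed

lemma algebraic_int_F_iff_dvd: "algebraic_int (F / real p ^ 2) \<longleftrightarrow> (int p)\<^sup>2 dvd V p - k"
proof -
  define r :: real where "r = of_int (V p - k) / of_int ((int p)\<^sup>2)"
  have F: "F / real p ^ 2 = r * \<alpha> ^ p" unfolding F_eq_unit_times_int r_def by simp
  show ?thesis
  proof
    assume "algebraic_int (F / real p ^ 2)"
    then have "r \<in> \<int>" unfolding F using \<alpha>_power_p_times_\<beta>_power_p
      by (intro Rats_times_unit_algebraic_int_imp_Ints[of _ _ "- (\<beta> ^ p)"]) (auto simp: r_def)
    then obtain c where "r = of_int c" by (elim Ints_cases)
    then have "(of_int (V p - k) :: real) = of_int ((int p)\<^sup>2 * c)"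
      unfolding r_def using p_pos by (simp add: field_simps)
    then have "V p - k = (int p)\<^sup>2 * c" by (simp only: of_int_eq_iff)
    then show "(int p)\<^sup>2 dvd V p - k" ..
  next
    assume "(int p)\<^sup>2 dvd V p - k"
    then obtain c where "V p - k = (int p)\<^sup>2 * c" ..
    then have "r * \<alpha> ^ p = of_int c * \<alpha> ^ p" unfolding r_def using p_pos by simp
    moreover have "of_int c * \<alpha> ^ p \<in> Z\<alpha>" by simp
    ultimately show "algebraic_int (F / real p ^ 2)" unfolding F by (metis Z\<alpha>_algebraic_int)
  qed
qed

lemma k_wall_sun_sun_iff:
  assumes "\<not> (int p)\<^sup>2 dvd D"
  shows "k_wall_sun_sun k p \<longleftrightarrow> algebraic_int (F / real p ^ 2)"
  using prime_p ord\<alpha>_square_eq_iff_cong_F[OF assms]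
  unfolding k_wall_sun_sun_def pisano_eq_ord\<alpha> cong_F_iff_dvd algebraic_int_F_iff_dvd by simp

end

theorem lemma3p5:
  fixes k :: int and p :: nat
  assumes "k \<ge> 1" and "\<not> 4 dvd k"
    and "squarefree ((k\<^sup>2 + 4) div (gcd 2 k)\<^sup>2)"
    and "prime p" and "p \<ge> 3"
  defines "\<alpha> \<equiv> (real_of_int k + sqrt (real_of_int (k\<^sup>2 + 4))) / 2"
  shows "k_wall_sun_sun k p \<longleftrightarrow>
    algebraic_int ((\<alpha> ^ (2 * p) - real_of_int k * \<alpha> ^ p - 1) / real p ^ 2)"
proof -
  have "lucas k" "lucas_prime k p"
    using assms(1,4,5) by unfold_locales
  have "\<not> (int p)\<^sup>2 dvd lucas.D k"
    using prime_square_not_dvd_square_plus_4[OF assms(3), of "int p"] assms(4)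
      lucas_prime.p_odd[OF \<open>lucas_prime k p\<close>]
    by (simp add: lucas.D_def[OF \<open>lucas k\<close>])
  then have "k_wall_sun_sun k p \<longleftrightarrow> algebraic_int (lucas_prime.F k p / real p ^ 2)"
    by (rule lucas_prime.k_wall_sun_sun_iff[OF \<open>lucas_prime k p\<close>])
  then show ?thesis
    unfolding lucas_prime.F_def[OF \<open>lucas_prime k p\<close>] lucas.\<alpha>_def[OF \<open>lucas k\<close>]
      lucas.\<delta>_def[OF \<open>lucas k\<close>] lucas.D_def[OF \<open>lucas k\<close>] \<alpha>_def .
qed

end
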